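(* Let $S$ be a periodic semigroup such that $E(S)\subseteq Z(S)$. Then the map $\pi:S\to E(S)$ is a semigroup homomorphism and the Clifford part $H(S)$ is a subsemigroup of $S$.
   Context: A semigroup $S$ is periodic if for every $x\in S$ some power $x^n$, $n\ge1$, is an idempotent; then the monogenic semigroup $\{x^n:n\in\mathbb N\}$ contains exactly one idempotent, denoted $\pi(x)$, defining $\pi:S\to E(S)$. $E(S)=\{x\in S:xx=x\}$ is the set of idempotents; $Z(S)=\{z\in S:\forall x\in S\ (xz=zx)\}$ is the center. $H(S)=\bigcup_{e\in E(S)}H_e$, where $H_e$ is the maximal subgroup of $S$ containing the idempotent $e$. *)

theory Defs
  imports Main
begin

text \<open>Positive powers in a semigroup: spow x n = x^(n+1).\<close>
fun spow :: "'a::semigroup_mult \<Rightarrow> nat \<Rightarrow> 'a" where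
  "spow x 0 = x"
| "spow x (Suc n) = x * spow x n"

definition idems :: "'a::semigroup_mult set" where
  "idems = {e. e * e = e}"

definition center :: "'a::semigroup_mult set" where
  "center = {z. \<forall>x. x * z = z * x}"

definition periodic :: "'a::semigroup_mult itself \<Rightarrow> bool" where
  "periodic _ \<longleftrightarrow> (\<forall>x::'a. \<exists>n. spow x n \<in> idems)"

definition pi_idem :: "'a::semigroup_mult \<Rightarrow> 'a" where
  "pi_idem x = (THE e. e \<in> idems \<and> (\<exists>n. e = spow x n))"

definition is_subgroup :: "'a::semigroup_mult set \<Rightarrow> bool" where
  "is_subgroup G \<longleftrightarrow> (\<forall>a\<in>G. \<forall>b\<in>G. a * b \<in> G) \<and>
     (\<exists>u\<in>G. \<forall>a\<in>G. u * a = a \<and> a * u = a \<and> (\<exists>b\<in>G. a * b = u \<and> b * a = u))"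

definition maxsubgroup :: "'a::semigroup_mult \<Rightarrow> 'a set" where
  "maxsubgroup e = \<Union>{G. is_subgroup G \<and> e \<in> G}"

definition clifford_part :: "'a::semigroup_mult set" where
  "clifford_part = (\<Union>e\<in>idems. maxsubgroup e)"

end

theory Submission
  imports Defs
begin

text \<open>Everything rests on one observation: if \<open>g = a g b\<close> then \<open>g = a\<^sup>n g b\<^sup>n\<close>, so \<open>g\<close> is absorbed by
  every idempotent power of \<open>a\<close> on the left and of \<open>b\<close> on the right. With central idempotents,
  \<open>g = \<pi>(xy)\<close> sandwiches itself between \<open>x\<close> and a cofactor and between a cofactor and \<open>y\<close>, so
  \<open>g \<pi>(x) \<pi>(y) = g\<close>; and \<open>k = \<pi>(x) \<pi>(y)\<close> sandwiches itself between \<open>xy\<close> and an inverse of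
  \<open>xy\<close> relative to \<open>k\<close>, so \<open>g k = k\<close>. For the Clifford part, \<open>H\<^sub>e\<close> is the group of units of
  the local monoid at \<open>e\<close>, and central idempotents make \<open>H\<^sub>e H\<^sub>f \<subseteq> H\<^sub>e\<^sub>f\<close>.\<close>

lemma spow_Suc_add: "spow x (Suc (a + b)) = spow x a * spow x b"
  by (induction a) (simp_all add: mult.assoc)

lemma spow_Suc_right: "spow x (Suc n) = spow x n * x"
  using spow_Suc_add[of x n 0] by simp

lemma spow_spow: "spow (spow x a) b = spow x (a + b * (a + 1))"
proof (induction b)
  case 0
  then show ?case by simp
next
  case (Suc b)
  have "spow (spow x a) (Suc b) = spow x a * spow x (a + b * (a + 1))"
    using Suc by simp
  also have "\<dots> = spow x (Suc (a + (a + b * (a + 1))))"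
    by (rule spow_Suc_add[symmetric])
  finally show ?case by (simp add: algebra_simps)
qed

lemma spow_idem: "e * e = e \<Longrightarrow> spow e n = e"
  by (induction n) simp_all

lemma spow_idems_unique:
  assumes "spow x a \<in> idems" "spow x b \<in> idems"
  shows "spow x a = spow x b"
proof -
  have "spow x a = spow (spow x a) b"
    using assms by (simp add: spow_idem idems_def)
  also have "\<dots> = spow (spow x b) a"
    by (simp add: spow_spow algebra_simps)
  also have "\<dots> = spow x b"
    using assms by (simp add: spow_idem idems_def)
  finally show ?thesis .
qed

lemma pi_idem_eq: "spow x n \<in> idems \<Longrightarrow> pi_idem x = spow x n"
  unfolding pi_idem_def by (rule the1_equality) (auto intro: spow_idems_unique)

lemma periodicE:
  assumes "periodic TYPE('a::semigroup_mult)"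
  obtains n where "spow (x::'a) n \<in> idems"
  using assms unfolding periodic_def by blast

lemma pi_idem_in_idems:
  assumes "periodic TYPE('a::semigroup_mult)"
  shows "pi_idem (x::'a) \<in> idems"
  using pi_idem_eq by (metis periodicE[OF assms])

lemma spow_idems_inverse:
  assumes "spow x n \<in> idems"
  shows "x * spow x (n + n) = spow x n" and "spow x (n + n) * x = spow x n"
  using assms spow_Suc_add[of x n n] spow_Suc_right[of x "n + n"]
  by (simp_all add: idems_def)

lemma sandwich_spow:
  assumes "g = a * g * b"
  shows "spow a n * g * spow b n = g"
proof (induction n)
  case 0
  then show ?case using assms[symmetric] by simp
next
  case (Suc n)
  have "spow a (Suc n) * g * spow b (Suc n) = spow a n * (a * g * b) * spow b n"
    by (subst spow_Suc_right) (simp add: mult.assoc)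
  then show ?case using Suc assms[symmetric] by simp
qed

lemma sandwich_idem_left:
  assumes "g = a * g * b" and "spow a n \<in> idems"
  shows "spow a n * g = g"
proof -
  have g: "spow a n * g * spow b n = g" by (rule sandwich_spow[OF assms(1)])
  then have "spow a n * g = spow a n * (spow a n * g * spow b n)" by simp
  also have "\<dots> = (spow a n * spow a n) * g * spow b n" by (simp add: mult.assoc)
  also have "\<dots> = g" using assms(2) g by (simp add: idems_def)
  finally show ?thesis .
qed

lemma sandwich_idem_right:
  assumes "g = a * g * b" and "spow b n \<in> idems"
  shows "g * spow b n = g"
proof -
  have g: "spow a n * g * spow b n = g" by (rule sandwich_spow[OF assms(1)])
  then have "g * spow b n = (spow a n * g * spow b n) * spow b n" by simp
  also have "\<dots> = spow a n * g * (spow b n * spow b n)" by (simp add: mult.assoc)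
  also have "\<dots> = g" using assms(2) g by (simp add: idems_def)
  finally show ?thesis .
qed

lemma central_idem_commute:
  fixes e x :: "'a::semigroup_mult"
  assumes "(idems :: 'a set) \<subseteq> center" and "e \<in> idems"
  shows "x * e = e * x"
proof -
  have "e \<in> center" using assms by blast
  then show ?thesis unfolding center_def by simp
qed

lemma central_idem_sandwich:
  fixes g x t :: "'a::semigroup_mult"
  assumes "(idems :: 'a set) \<subseteq> center" and "g \<in> idems" and "g = x * t"
  shows "g = x * g * t"
proof -
  have "x * g * t = x * t * g"
    using central_idem_commute[OF assms(1,2), of t] by (simp add: mult.assoc)
  then show ?thesis using assms(2,3) by (simp add: idems_def)
qed

lemma central_idems_mult_closed:
  fixes e f :: "'a::semigroup_mult"
  assumes "(idems :: 'a set) \<subseteq> center" and "e \<in> idems" and "f \<in> idems"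
  shows "e * f \<in> idems"
proof -
  have "e * f * (e * f) = e * ((f * e) * f)" by (simp add: mult.assoc)
  also have "\<dots> = (e * e) * (f * f)"
    using central_idem_commute[OF assms(1,2), of f] by (simp add: mult.assoc)
  finally show ?thesis using assms(2,3) by (simp add: idems_def)
qed

lemma central_idems_mult_sandwich:
  fixes e f x y a b :: "'a::semigroup_mult"
  assumes central: "(idems :: 'a set) \<subseteq> center" and e: "e \<in> idems" and f: "f \<in> idems"
    and xa: "x * a = e" and yb: "y * b = f"
  shows "e * f = (x * y) * (e * f) * (b * a)"
proof -
  define k where "k = e * f"
  have k: "k \<in> idems"
    unfolding k_def by (rule central_idems_mult_closed[OF central e f])
  have ek: "e * k = k"
    using e by (simp add: k_def idems_def mult.assoc[symmetric])
  have "f * k = e * (f * f)"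
    using central_idem_commute[OF central e, of f] by (simp add: k_def mult.assoc[symmetric])
  then have fk: "f * k = k"
    using f by (simp add: k_def idems_def)
  have "(x * y) * k * (b * a) = x * (y * (k * b)) * a"
    by (simp add: mult.assoc)
  also have "\<dots> = x * ((y * b) * k) * a"
    by (simp add: central_idem_commute[OF central k, of b] mult.assoc)
  also have "\<dots> = x * (a * k)"
    using yb fk central_idem_commute[OF central k, of a] by (simp add: mult.assoc)
  also have "\<dots> = k"
    using xa ek by (simp add: mult.assoc[symmetric])
  finally show ?thesis unfolding k_def ..
qed

lemma pi_idem_mult:
  fixes x y :: "'a::semigroup_mult"
  assumes central: "(idems :: 'a set) \<subseteq> center" and periodic: "periodic TYPE('a)"
  shows "pi_idem (x * y) = pi_idem x * pi_idem y"
proof -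
  obtain p m n where
    gi: "spow (x * y) p \<in> idems" and ei: "spow x m \<in> idems" and fi: "spow y n \<in> idems"
    by (metis periodicE[OF periodic])
  define g e f where "g = spow (x * y) p" and "e = spow x m" and "f = spow y n"
  define w where "w = spow (x * y) (p + p)"
  note g = gi[folded g_def] and e = ei[folded e_def] and f = fi[folded f_def]
  have "g = x * g * (y * w)"
    using spow_idems_inverse(1)[OF gi] by (intro central_idem_sandwich[OF central g])
      (simp add: g_def w_def mult.assoc)
  then have ge: "e * g = g" unfolding e_def by (rule sandwich_idem_left[OF _ ei])
  have "g = (w * x) * g * y"
    using spow_idems_inverse(2)[OF gi] by (intro central_idem_sandwich[OF central g])
      (simp add: g_def w_def mult.assoc)
  then have gf: "g * f = g" unfolding f_def by (rule sandwich_idem_right[OF _ fi])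
  have "g * (e * f) = g"
    using ge gf central_idem_commute[OF central e, of g] by (simp add: mult.assoc[symmetric])
  moreover have "g * (e * f) = e * f"
    using central_idems_mult_sandwich[OF central e f
        spow_idems_inverse(1)[OF ei, folded e_def] spow_idems_inverse(1)[OF fi, folded f_def]]
    unfolding g_def by (rule sandwich_idem_left[OF _ gi])
  ultimately show ?thesis
    using pi_idem_eq[OF gi] pi_idem_eq[OF ei] pi_idem_eq[OF fi] by (simp add: g_def e_def f_def)
qed

definition units_at :: "'a::semigroup_mult \<Rightarrow> 'a set" where
  "units_at e = {a. e * a = a \<and> a * e = a \<and> (\<exists>w. e * w = w \<and> w * e = w \<and> a * w = e \<and> w * a = e)}"

lemma idem_in_units_at: "e * e = e \<Longrightarrow> e \<in> units_at e"
  unfolding units_at_def by blast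

lemma units_at_mult_closed:
  assumes "a \<in> units_at e" and "b \<in> units_at e"
  shows "a * b \<in> units_at e"
proof -
  obtain w where a: "e * a = a" "a * e = a" and w: "e * w = w" "w * e = w" "a * w = e" "w * a = e"
    using assms(1) unfolding units_at_def by blast
  obtain v where b: "e * b = b" "b * e = b" and v: "e * v = v" "v * e = v" "b * v = e" "v * b = e"
    using assms(2) unfolding units_at_def by blast
  have "a * b * (v * w) = e" and "v * w * (a * b) = e"
    by (metis a b v w mult.assoc)+
  moreover have "e * (a * b) = a * b" "a * b * e = a * b" "e * (v * w) = v * w" "v * w * e = v * w"
    by (metis a b v w mult.assoc)+
  ultimately show ?thesis unfolding units_at_def by blast
qed

lemma units_at_is_subgroup:
  assumes "e * e = e"
  shows "is_subgroup (units_at e)"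
proof -
  have "e * a = a \<and> a * e = a \<and> (\<exists>b\<in>units_at e. a * b = e \<and> b * a = e)"
    if a: "a \<in> units_at e" for a
  proof -
    obtain w where "e * a = a" "a * e = a" "e * w = w" "w * e = w" "a * w = e" "w * a = e"
      using a unfolding units_at_def by blast
    moreover from this have "w \<in> units_at e" unfolding units_at_def by blast
    ultimately show ?thesis by blast
  qed
  then show ?thesis
    unfolding is_subgroup_def using idem_in_units_at[OF assms] units_at_mult_closed by blast
qed

lemma subgroup_subset_units_at:
  assumes G: "is_subgroup G" and "e \<in> G" and "e * e = e"
  shows "G \<subseteq> units_at e"
proof -
  obtain u where "u \<in> G" and u: "\<And>a. a \<in> G \<Longrightarrow> u * a = a \<and> a * u = a \<and> (\<exists>b\<in>G. a * b = u \<and> b * a = u)"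
    using G unfolding is_subgroup_def by blast
  obtain c where "e * c = u" using u[OF \<open>e \<in> G\<close>] by blast
  then have "u = e"
    using \<open>e * e = e\<close> u[OF \<open>e \<in> G\<close>] by (metis mult.assoc)
  then show ?thesis
    using u unfolding units_at_def by blast
qed

lemma maxsubgroup_eq_units_at:
  assumes "e * e = e"
  shows "maxsubgroup e = units_at e"
  unfolding maxsubgroup_def
proof (rule antisym)
  show "\<Union>{G. is_subgroup G \<and> e \<in> G} \<subseteq> units_at e"
    using subgroup_subset_units_at[OF _ _ assms] by (intro Union_least) blast
  show "units_at e \<subseteq> \<Union>{G. is_subgroup G \<and> e \<in> G}"
    using units_at_is_subgroup[OF assms] idem_in_units_at[OF assms] by (intro Union_upper) blast
qed

lemma units_at_mult_central:
  fixes e f a b :: "'a::semigroup_mult"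
  assumes central: "(idems :: 'a set) \<subseteq> center" and "e \<in> idems" "f \<in> idems"
    and "a \<in> units_at e" and "b \<in> units_at f"
  shows "a * b \<in> units_at (e * f)"
proof -
  obtain w where a: "e * a = a" "a * e = a" and w: "e * w = w" "w * e = w" "a * w = e" "w * a = e"
    using assms(4) unfolding units_at_def by blast
  obtain v where b: "f * b = b" "b * f = b" and v: "f * v = v" "v * f = v" "b * v = f" "v * b = f"
    using assms(5) unfolding units_at_def by blast
  have ce: "\<And>z. z * e = e * z" and cf: "\<And>z. z * f = f * z"
    using central_idem_commute[OF central] assms(2,3) by blast+
  have "e * f * (a * b) = a * b" "a * b * (e * f) = a * b"
    by (metis a b ce cf mult.assoc)+
  moreover have "e * f * (v * w) = v * w" "v * w * (e * f) = v * w"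
    by (metis v w ce cf mult.assoc)+
  moreover have "a * b * (v * w) = e * f" "v * w * (a * b) = e * f"
    by (metis a b v w ce cf mult.assoc)+
  ultimately show ?thesis unfolding units_at_def by blast
qed

lemma clifford_part_mult_closed:
  fixes a b :: "'a::semigroup_mult"
  assumes central: "(idems :: 'a set) \<subseteq> center"
    and "a \<in> clifford_part" and "b \<in> clifford_part"
  shows "a * b \<in> clifford_part"
proof -
  obtain e f where e: "e \<in> idems" "a \<in> units_at e" and f: "f \<in> idems" "b \<in> units_at f"
    using assms(2,3) maxsubgroup_eq_units_at unfolding clifford_part_def idems_def by blast
  then have "a * b \<in> units_at (e * f)" and "e * f \<in> idems"
    using units_at_mult_central[OF central] central_idems_mult_closed[OF central] by blast+
  then show ?thesis
    using maxsubgroup_eq_units_at unfolding clifford_part_def idems_def by blast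
qed

theorem proposition3p2:
  assumes "periodic TYPE('a::semigroup_mult)"
    and "(idems :: 'a set) \<subseteq> center"
  shows "(\<forall>x::'a. pi_idem x \<in> idems)
       \<and> (\<forall>x y::'a. pi_idem (x * y) = pi_idem x * pi_idem y)
       \<and> (\<forall>a\<in>(clifford_part :: 'a set). \<forall>b\<in>clifford_part. a * b \<in> clifford_part)"
  using pi_idem_in_idems[OF assms(1)] pi_idem_mult[OF assms(2,1)]
    clifford_part_mult_closed[OF assms(2)] by simp

end
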